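(* Let $p$ be an odd prime. Let $N$ be a subgroup of $\mathrm{PGL}_2(\mathbb{F}_p)$ isomorphic to $C_2\times C_2$, so that there are three subgroups $C<N$ of index $2$. If $N\le\mathrm{PSL}_2(\mathbb{F}_p)$, then every such $C$ is contained in (the image of) a Cartan subgroup and $N$ in its normaliser, and each $C$ is split when $p\equiv1\pmod4$ and non-split when $p\equiv3\pmod4$. If $N\not\le\mathrm{PSL}_2(\mathbb{F}_p)$, then for $p\equiv1\pmod4$ one such subgroup $C$ is contained in a split Cartan subgroup while the other two are contained in non-split Cartan subgroups; while if $p\equiv3\pmod4$ then one $C$ is non-split and the other two are split.
   Context: A Cartan subgroup of $\mathrm{GL}_2(\mathbb{F}_p)$ is split (conjugate to the diagonal matrices) or non-split (conjugate to the image of $\mathbb{F}_{p^2}^*$ acting on $\mathbb{F}_{p^2}\cong\mathbb{F}_p^2$); Cartan subgroups of $\mathrm{PGL}_2(\mathbb{F}_p)$, their normalisers, and the terms split/non-split there refer to images of those in $\mathrm{GL}_2(\mathbb{F}_p)$. $\mathrm{PSL}_2(\mathbb{F}_p)$ is viewed as the index-$2$ subgroup of $\mathrm{PGL}_2(\mathbb{F}_p)$ of classes of matrices with square determinant. *)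

theory Defs
  imports "HOL-Algebra.Algebra" "HOL-Algebra.Group_Action" "HOL-Algebra.Elementary_Groups"
          "HOL-Number_Theory.Residues"
begin

text \<open>2x2 matrices over F_p, written (a,b,c,d) for the matrix [[a,b],[c,d]],
  with entries taken as canonical representatives in {0..<p}.\<close>

type_synonym mat2 = "int \<times> int \<times> int \<times> int"

definition mat2_mult :: "int \<Rightarrow> mat2 \<Rightarrow> mat2 \<Rightarrow> mat2" where
  "mat2_mult p = (\<lambda>(a,b,c,d) (e,f,g,h).
     ((a*e + b*g) mod p, (a*f + b*h) mod p, (c*e + d*g) mod p, (c*f + d*h) mod p))"

definition mat2_det :: "mat2 \<Rightarrow> int" where
  "mat2_det M = (case M of (x,y,z,w) \<Rightarrow> x*w - y*z)"

definition GL2 :: "int \<Rightarrow> mat2 monoid" where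
  "GL2 p = \<lparr> carrier = {(a,b,c,d). a \<in> {0..<p} \<and> b \<in> {0..<p} \<and> c \<in> {0..<p} \<and> d \<in> {0..<p}
                                  \<and> mat2_det (a,b,c,d) mod p \<noteq> 0},
             monoid.mult = mat2_mult p, one = (1,0,0,1) \<rparr>"

definition scalars :: "int \<Rightarrow> mat2 set" where
  "scalars p = {(a,0,0,a) | a. a \<in> {1..<p}}"

definition PGL2 :: "int \<Rightarrow> mat2 set monoid" where
  "PGL2 p = GL2 p Mod scalars p"

definition proj2 :: "int \<Rightarrow> mat2 \<Rightarrow> mat2 set" where
  "proj2 p g = scalars p #>\<^bsub>GL2 p\<^esub> g"

definition PSL2 :: "int \<Rightarrow> mat2 set set" where
  "PSL2 p = {proj2 p g | g. g \<in> carrier (GL2 p) \<and> QuadRes p (mat2_det g)}"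

definition conjugate_set :: "int \<Rightarrow> mat2 \<Rightarrow> mat2 set \<Rightarrow> mat2 set" where
  "conjugate_set p h T = (\<lambda>t. h \<otimes>\<^bsub>GL2 p\<^esub> t \<otimes>\<^bsub>GL2 p\<^esub> inv\<^bsub>GL2 p\<^esub> h) ` T"

definition diag_torus :: "int \<Rightarrow> mat2 set" where
  "diag_torus p = {(a,0,0,d) | a d. a \<in> {1..<p} \<and> d \<in> {1..<p}}"

text \<open>Image of F_{p^2}^* = F_p(sqrt e)^* (e a non-square mod p) acting by multiplication
  on F_{p^2} with F_p-basis 1, sqrt e: a + b sqrt e acts by [[a, b e],[b, a]].\<close>
definition nonsplit_torus :: "int \<Rightarrow> int \<Rightarrow> mat2 set" where
  "nonsplit_torus p e = {(a, (b*e) mod p, b, a) | a b. a \<in> {0..<p} \<and> b \<in> {0..<p} \<and> (a,b) \<noteq> (0,0)}"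

definition split_cartan :: "int \<Rightarrow> mat2 set \<Rightarrow> bool" where
  "split_cartan p T \<longleftrightarrow> (\<exists>h \<in> carrier (GL2 p). T = conjugate_set p h (diag_torus p))"

definition nonsplit_cartan :: "int \<Rightarrow> mat2 set \<Rightarrow> bool" where
  "nonsplit_cartan p T \<longleftrightarrow> (\<exists>h \<in> carrier (GL2 p). \<exists>e. \<not> QuadRes p e \<and>
        T = conjugate_set p h (nonsplit_torus p e))"

definition cartan :: "int \<Rightarrow> mat2 set \<Rightarrow> bool" where
  "cartan p T \<longleftrightarrow> split_cartan p T \<or> nonsplit_cartan p T"

definition in_split_cartan :: "int \<Rightarrow> mat2 set set \<Rightarrow> bool" where
  "in_split_cartan p C \<longleftrightarrow> (\<exists>T. split_cartan p T \<and> C \<subseteq> proj2 p ` T)"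

definition in_nonsplit_cartan :: "int \<Rightarrow> mat2 set set \<Rightarrow> bool" where
  "in_nonsplit_cartan p C \<longleftrightarrow> (\<exists>T. nonsplit_cartan p T \<and> C \<subseteq> proj2 p ` T)"

definition index2_subgroups :: "int \<Rightarrow> mat2 set set \<Rightarrow> mat2 set set set" where
  "index2_subgroups p N = {C. subgroup C (PGL2 p) \<and> C \<subseteq> N \<and> card N = 2 * card C}"

end

(* Every element x <> 1 of N is an involution of PGL_2(F_p). A lift g of x to GL_2(F_p) has
   scalar square without being scalar, which forces trace g = 0: g = [[a, b], [c, -a]] and
   -det g = a^2 + bc. If -det g is a square s^2 mod p, then g has the distinct eigenvalues s, -s
   and its centraliser is conjugate to the diagonal torus; otherwise the basis (v, g v)
   conjugates g to the companion matrix of X^2 - (a^2 + bc), whose centraliser is the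
   non-split torus of F_p(sqrt (a^2 + bc)). Either way {1, x} lies in the image of this Cartan
   subgroup, and N normalises it because N is abelian, so its elements commute with g up to a
   scalar.

   Since -1 is a square exactly when p = 1 (mod 4), the centraliser is split iff
   (x in PSL_2 <-> p = 1 (mod 4)). If N <= PSL_2 this settles all three subgroups at once;
   otherwise N meets PSL_2 in a subgroup of index 2, so exactly one of the three involutions
   lies in PSL_2. *)

theory Submission
  imports Defs "HOL-Number_Theory.Euler_Criterion"
begin

fun mat2_prod :: "mat2 \<Rightarrow> mat2 \<Rightarrow> mat2" where
  "mat2_prod (a, b, c, d) (e, f, g, h) = (a*e + b*g, a*f + b*h, c*e + d*g, c*f + d*h)"

fun mat2_mod :: "int \<Rightarrow> mat2 \<Rightarrow> mat2" where
  "mat2_mod p (a, b, c, d) = (a mod p, b mod p, c mod p, d mod p)"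

lemma mat2_prod_assoc: "mat2_prod (mat2_prod A B) C = mat2_prod A (mat2_prod B C)"
  by (cases A; cases B; cases C) (simp add: algebra_simps)

lemma mat2_det_prod: "mat2_det (mat2_prod A B) = mat2_det A * mat2_det B"
  by (cases A; cases B) (simp add: mat2_det_def algebra_simps)

lemma mod_sum_of_products_eq:
  "(a mod p * (b mod p) + c mod p * (d mod p)) mod p = (a * b + c * d) mod (p :: int)"
  by (metis mod_add_eq mod_mult_eq)

lemma mod_diff_of_products_eq:
  "(a mod p * (b mod p) - c mod p * (d mod p)) mod p = (a * b - c * d) mod (p :: int)"
  by (metis mod_diff_eq mod_mult_eq)

lemma mat2_det_mod: "mat2_det (mat2_mod p A) mod p = mat2_det A mod p"
  by (cases A) (simp add: mat2_det_def mod_diff_of_products_eq)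

lemma mat2_det_trace_zero: "[mat2_det (a, b, c, (- a) mod p) = - (a * a + b * c)] (mod p)"
proof -
  have "(a * ((- a) mod p) - b * c) mod p = (a * (- a) - b * c) mod p"
    by (metis mod_diff_left_eq mod_mult_right_eq)
  then show ?thesis by (simp add: mat2_det_def cong_def)
qed

lemma mat2_mod_idem: "mat2_mod p (mat2_mod p A) = mat2_mod p A"
  by (cases A) simp

lemma mat2_mod_prod_mod:
  "mat2_mod p (mat2_prod (mat2_mod p A) (mat2_mod p B)) = mat2_mod p (mat2_prod A B)"
  by (cases A; cases B) (simp add: mod_sum_of_products_eq)

lemma residue_dvd_iff: "x \<in> {0..<p} \<Longrightarrow> p dvd x \<longleftrightarrow> x = (0 :: int)"
  using zdvd_not_zless[of x p] by fastforce

lemma residue_eq_iff_dvd: "x \<in> {0..<p} \<Longrightarrow> y \<in> {0..<p} \<Longrightarrow> x = y \<longleftrightarrow> p dvd x - (y :: int)"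
  using mod_eq_dvd_iff[of x p y] by simp

lemma QuadRes_cong: "[a = b] (mod p) \<Longrightarrow> QuadRes p a \<longleftrightarrow> QuadRes p b"
  unfolding QuadRes_def by (meson cong_sym cong_trans)

lemma mult_GL2: "A \<otimes>\<^bsub>GL2 p\<^esub> B = mat2_mod p (mat2_prod A B)"
  by (cases A; cases B) (simp add: GL2_def mat2_mult_def)

lemma mult_GL2_mat2_mod: "mat2_mod p A \<otimes>\<^bsub>GL2 p\<^esub> mat2_mod p B = mat2_mod p (mat2_prod A B)"
  by (simp add: mult_GL2 mat2_mod_prod_mod)

lemma one_GL2: "\<one>\<^bsub>GL2 p\<^esub> = (1, 0, 0, 1)"
  by (simp add: GL2_def)

lemma carrier_GL2_iff:
  "(a, b, c, d) \<in> carrier (GL2 p) \<longleftrightarrow>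
     a \<in> {0..<p} \<and> b \<in> {0..<p} \<and> c \<in> {0..<p} \<and> d \<in> {0..<p} \<and> \<not> p dvd a * d - b * c"
  by (simp add: GL2_def mat2_det_def mod_eq_0_iff_dvd)

lemma mat2_mod_in_carrier_GL2_iff:
  "p > 0 \<Longrightarrow> mat2_mod p A \<in> carrier (GL2 p) \<longleftrightarrow> \<not> p dvd mat2_det A"
  using mat2_det_mod[of p A] by (cases A) (simp add: GL2_def, metis dvd_eq_mod_eq_0)

lemma mat2_mod_carrier_GL2: "A \<in> carrier (GL2 p) \<Longrightarrow> mat2_mod p A = A"
  by (cases A) (simp add: GL2_def)

lemma det_not_dvd_GL2: "A \<in> carrier (GL2 p) \<Longrightarrow> \<not> p dvd mat2_det A"
  by (cases A) (simp add: carrier_GL2_iff mat2_det_def)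

lemma det_mult_GL2: "[mat2_det (A \<otimes>\<^bsub>GL2 p\<^esub> B) = mat2_det A * mat2_det B] (mod p)"
  by (simp add: mult_GL2 cong_def mat2_det_mod mat2_det_prod)

definition centralizer :: "('a, 'b) monoid_scheme \<Rightarrow> 'a \<Rightarrow> 'a set" where
  "centralizer G g = {x \<in> carrier G. x \<otimes>\<^bsub>G\<^esub> g = g \<otimes>\<^bsub>G\<^esub> x}"

context group
begin

lemma inv_l_cancel_assoc: "x \<in> carrier G \<Longrightarrow> y \<in> carrier G \<Longrightarrow> inv x \<otimes> (x \<otimes> y) = y"
  by (simp add: m_assoc[symmetric])

lemma inv_r_cancel_assoc: "x \<in> carrier G \<Longrightarrow> y \<in> carrier G \<Longrightarrow> x \<otimes> (inv x \<otimes> y) = y"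
  by (simp add: m_assoc[symmetric])

lemma conj_mult:
  assumes "h \<in> carrier G" "x \<in> carrier G" "y \<in> carrier G"
  shows "h \<otimes> (x \<otimes> y) \<otimes> inv h = (h \<otimes> x \<otimes> inv h) \<otimes> (h \<otimes> y \<otimes> inv h)"
  using assms by (simp add: m_assoc inv_l_cancel_assoc)

lemma centralizer_conj:
  assumes h: "h \<in> carrier G" and g: "g \<in> carrier G"
  shows "(\<lambda>x. h \<otimes> x \<otimes> inv h) ` centralizer G g = centralizer G (h \<otimes> g \<otimes> inv h)"
proof (intro equalityI subsetI)
  fix y assume "y \<in> (\<lambda>x. h \<otimes> x \<otimes> inv h) ` centralizer G g"
  then obtain x where x: "x \<in> carrier G" "x \<otimes> g = g \<otimes> x" and y: "y = h \<otimes> x \<otimes> inv h"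
    by (auto simp: centralizer_def)
  then show "y \<in> centralizer G (h \<otimes> g \<otimes> inv h)"
    using h g by (simp add: centralizer_def flip: conj_mult)
next
  fix y assume "y \<in> centralizer G (h \<otimes> g \<otimes> inv h)"
  then have y: "y \<in> carrier G" and yg: "y \<otimes> (h \<otimes> g \<otimes> inv h) = (h \<otimes> g \<otimes> inv h) \<otimes> y"
    by (auto simp: centralizer_def)
  define x where "x = inv h \<otimes> y \<otimes> h"
  have x: "x \<in> carrier G" and y_eq: "y = h \<otimes> x \<otimes> inv h"
    using h y by (simp_all add: x_def m_assoc inv_r_cancel_assoc)
  have "h \<otimes> (x \<otimes> g) \<otimes> inv h = h \<otimes> (g \<otimes> x) \<otimes> inv h"
    using yg h g x by (simp add: y_eq conj_mult)
  then have "x \<otimes> g = g \<otimes> x" using h g x by simp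
  then show "y \<in> (\<lambda>x. h \<otimes> x \<otimes> inv h) ` centralizer G g"
    using x y_eq by (auto simp: centralizer_def)
qed

lemma centralizer_central_mult:
  assumes s: "s \<in> carrier G" and g: "g \<in> carrier G"
    and central: "\<And>x. x \<in> carrier G \<Longrightarrow> s \<otimes> x = x \<otimes> s"
  shows "centralizer G (s \<otimes> g) = centralizer G g"
proof -
  have "x \<otimes> (s \<otimes> g) = s \<otimes> g \<otimes> x \<longleftrightarrow> x \<otimes> g = g \<otimes> x" if x: "x \<in> carrier G" for x
  proof -
    have "x \<otimes> (s \<otimes> g) = s \<otimes> (x \<otimes> g)"
      using s g x by (simp add: m_assoc[symmetric] central[OF x])
    moreover have "s \<otimes> g \<otimes> x = s \<otimes> (g \<otimes> x)"
      using s g x by (simp add: m_assoc)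
    ultimately show ?thesis using s g x by simp
  qed
  then show ?thesis by (auto simp: centralizer_def)
qed

lemma exponent_two_commute:
  assumes x: "x \<in> carrier G" and y: "y \<in> carrier G"
    and sq: "x \<otimes> x = \<one>" "y \<otimes> y = \<one>" "(x \<otimes> y) \<otimes> (x \<otimes> y) = \<one>"
  shows "x \<otimes> y = y \<otimes> x"
proof -
  have "inv x = x" "inv y = y" "inv (x \<otimes> y) = x \<otimes> y"
    using x y sq by (simp_all add: inv_equality)
  then show ?thesis
    using x y inv_mult_group[OF x y] by simp
qed

lemma Klein_four_subgroupD:
  assumes N: "subgroup N G"
    and iso: "G\<lparr>carrier := N\<rparr> \<cong> integer_mod_group 2 \<times>\<times> integer_mod_group 2"
  shows "card N = 4" and "x \<in> N \<Longrightarrow> x \<otimes> x = \<one>"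
proof -
  let ?V = "integer_mod_group 2 \<times>\<times> integer_mod_group 2"
  show "card N = 4"
    using iso_same_card[OF iso] by (simp add: carrier_integer_mod_group)
  assume x: "x \<in> N"
  obtain f where f: "f \<in> iso (G\<lparr>carrier := N\<rparr>) ?V"
    using iso by (auto simp: is_iso_def)
  then have hom: "f \<in> hom (G\<lparr>carrier := N\<rparr>) ?V" and inj: "inj_on f N"
    by (auto simp: iso_def bij_betw_def)
  have one: "\<one> \<in> N" using subgroup.one_closed[OF N] by simp
  have f_mult: "f (a \<otimes> b) = f a \<otimes>\<^bsub>?V\<^esub> f b" if "a \<in> N" "b \<in> N" for a b
    using hom_mult[OF hom] that by simp
  have V_sq: "v \<otimes>\<^bsub>?V\<^esub> v = (0, 0)" for v
    by (simp add: mult_DirProd')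
  have "f (x \<otimes> x) = f (\<one> \<otimes> \<one>)"
    by (simp only: f_mult[OF x x] f_mult[OF one one] V_sq)
  then have "x \<otimes> x = \<one> \<otimes> \<one>"
    using inj x one subgroup.m_closed[OF N] by (auto dest: inj_onD)
  then show "x \<otimes> x = \<one>" by simp
qed

lemma index_two_subgroups_exponent_two:
  assumes N: "subgroup N G" and card: "card N = 4" and sq: "\<And>x. x \<in> N \<Longrightarrow> x \<otimes> x = \<one>"
  shows "{C. subgroup C G \<and> C \<subseteq> N \<and> card N = 2 * card C} = (\<lambda>x. {\<one>, x}) ` (N - {\<one>})"
proof (intro equalityI subsetI)
  fix C assume "C \<in> {C. subgroup C G \<and> C \<subseteq> N \<and> card N = 2 * card C}"
  then have C: "subgroup C G" "C \<subseteq> N" "card C = 2" using card by auto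
  then obtain u v where "C = {u, v}" "u \<noteq> v" by (auto simp: card_2_iff)
  moreover have "\<one> \<in> C" using subgroup.one_closed[OF C(1)] .
  ultimately obtain x where "C = {\<one>, x}" "x \<noteq> \<one>" by auto
  then show "C \<in> (\<lambda>x. {\<one>, x}) ` (N - {\<one>})" using C(2) by auto
next
  fix C assume "C \<in> (\<lambda>x. {\<one>, x}) ` (N - {\<one>})"
  then obtain x where x: "x \<in> N" "x \<noteq> \<one>" and C: "C = {\<one>, x}" by blast
  have xG: "x \<in> carrier G" using x subgroup.subset[OF N] by blast
  have "subgroup C G"
  proof (rule subgroupI)
    show "\<And>a. a \<in> C \<Longrightarrow> inv a \<in> C"
      using xG sq[OF x(1)] inv_equality[of x x] by (auto simp: C)
    show "\<And>a b. a \<in> C \<Longrightarrow> b \<in> C \<Longrightarrow> a \<otimes> b \<in> C"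
      using xG sq[OF x(1)] by (auto simp: C)
  qed (use xG C in auto)
  then show "C \<in> {C. subgroup C G \<and> C \<subseteq> N \<and> card N = 2 * card C}"
    using x card subgroup.one_closed[OF N] by (auto simp: C)
qed

lemma exponent_two_nonidentity_elements:
  assumes N: "subgroup N G" and card: "card N = 4" and sq: "\<And>x. x \<in> N \<Longrightarrow> x \<otimes> x = \<one>"
    and y: "y \<in> N - {\<one>}" and z: "z \<in> N - {\<one>, y}"
  shows "N - {\<one>} = {y, z, y \<otimes> z}" and "card {y, z, y \<otimes> z} = 3"
proof -
  have yG: "y \<in> carrier G" and zG: "z \<in> carrier G"
    using y z subgroup.subset[OF N] by auto
  have "y \<otimes> z \<noteq> \<one>"
  proof
    assume "y \<otimes> z = \<one>"
    then have "y \<otimes> z = y \<otimes> y" using sq[of y] y by simp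
    then show False using yG zG z by simp
  qed
  moreover have "y \<otimes> z \<noteq> y" "y \<otimes> z \<noteq> z"
    using yG zG y z by auto
  ultimately show card3: "card {y, z, y \<otimes> z} = 3"
    using z by auto
  have "{y, z, y \<otimes> z} \<subseteq> N - {\<one>}"
    using y z \<open>y \<otimes> z \<noteq> \<one>\<close> subgroup.m_closed[OF N] by auto
  moreover have "card (N - {\<one>}) = 3"
    using card subgroup.one_closed[OF N] by (simp add: card_Diff_singleton_if)
  moreover have "finite N" using card by (intro card_ge_0_finite) simp
  ultimately show "N - {\<one>} = {y, z, y \<otimes> z}"
    using card3 by (metis card_subset_eq finite_Diff)
qed

end

locale prime_modulus =
  fixes p :: int
  assumes prime: "Factorial_Ring.prime p"
begin

lemma gt_1: "p > 1"
  using prime_gt_1_int[OF prime] .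

lemma GL2_left_inverse:
  assumes A: "A \<in> carrier (GL2 p)"
  shows "\<exists>B \<in> carrier (GL2 p). B \<otimes>\<^bsub>GL2 p\<^esub> A = \<one>\<^bsub>GL2 p\<^esub>"
proof -
  obtain a b c d where A_eq: "A = (a, b, c, d)" by (cases A)
  have "coprime (mat2_det A) p"
    using det_not_dvd_GL2[OF A] prime by (simp add: prime_imp_coprime coprime_commute)
  then obtain u where u: "[mat2_det A * u = 1] (mod p)" using cong_solve_coprime_int by blast
  \<comment> \<open>the adjugate, scaled by an inverse of the determinant\<close>
  define B where "B = (u * d, - u * b, - u * c, u * a)"
  have BA: "mat2_prod B A = (u * mat2_det A, 0, 0, u * mat2_det A)"
    by (simp add: A_eq B_def mat2_det_def algebra_simps)
  have "\<not> p dvd u"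
  proof
    assume "p dvd u"
    then have "[1 = 0] (mod p)"
      using u by (metis cong_0_iff cong_sym cong_trans dvd_mult)
    then show False using gt_1 by (simp add: cong_0_iff)
  qed
  moreover have "mat2_det B = u * u * mat2_det A"
    by (simp add: A_eq B_def mat2_det_def algebra_simps)
  ultimately have "\<not> p dvd mat2_det B"
    using det_not_dvd_GL2[OF A] prime by (simp add: prime_dvd_mult_iff)
  then have "mat2_mod p B \<in> carrier (GL2 p)"
    using gt_1 by (simp add: mat2_mod_in_carrier_GL2_iff)
  moreover have "mat2_mod p B \<otimes>\<^bsub>GL2 p\<^esub> A = \<one>\<^bsub>GL2 p\<^esub>"
    using u mult_GL2_mat2_mod[of p B A] mat2_mod_carrier_GL2[OF A] gt_1
    by (simp add: BA one_GL2 cong_def mult.commute)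
  ultimately show ?thesis by blast
qed

sublocale GL2: group "GL2 p"
proof (rule groupI)
  show "\<one>\<^bsub>GL2 p\<^esub> \<in> carrier (GL2 p)" using gt_1 by (simp add: one_GL2 carrier_GL2_iff)
  fix A B assume A: "A \<in> carrier (GL2 p)" and B: "B \<in> carrier (GL2 p)"
  show "A \<otimes>\<^bsub>GL2 p\<^esub> B \<in> carrier (GL2 p)"
    using det_not_dvd_GL2[OF A] det_not_dvd_GL2[OF B] gt_1 prime
    by (simp add: mult_GL2 mat2_mod_in_carrier_GL2_iff mat2_det_prod prime_dvd_mult_iff)
  show "\<one>\<^bsub>GL2 p\<^esub> \<otimes>\<^bsub>GL2 p\<^esub> A = A"
    using mat2_mod_carrier_GL2[OF A] by (cases A) (simp add: mult_GL2 one_GL2)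
  fix C assume C: "C \<in> carrier (GL2 p)"
  show "A \<otimes>\<^bsub>GL2 p\<^esub> B \<otimes>\<^bsub>GL2 p\<^esub> C = A \<otimes>\<^bsub>GL2 p\<^esub> (B \<otimes>\<^bsub>GL2 p\<^esub> C)"
    using mat2_mod_prod_mod[of p "mat2_prod A B" C] mat2_mod_prod_mod[of p A "mat2_prod B C"]
    by (simp add: mult_GL2 mat2_prod_assoc mat2_mod_idem mat2_mod_carrier_GL2[OF A] mat2_mod_carrier_GL2[OF C])
qed (rule GL2_left_inverse)

lemma scalars_subset: "scalars p \<subseteq> carrier (GL2 p)"
  using prime by (auto simp: scalars_def carrier_GL2_iff prime_dvd_mult_iff zdvd_not_zless)

lemma scalars_central: "z \<in> scalars p \<Longrightarrow> x \<in> carrier (GL2 p) \<Longrightarrow> z \<otimes>\<^bsub>GL2 p\<^esub> x = x \<otimes>\<^bsub>GL2 p\<^esub> z"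
  by (cases x) (auto simp: scalars_def mult_GL2 mult.commute)

lemma subgroup_scalars: "subgroup (scalars p) (GL2 p)"
proof (rule GL2.subgroupI[OF scalars_subset])
  show "scalars p \<noteq> {}" using gt_1 by (auto simp: scalars_def)
next
  fix x y assume "x \<in> scalars p" "y \<in> scalars p"
  then obtain a b where ab: "x = (a, 0, 0, a)" "y = (b, 0, 0, b)" "a \<in> {1..<p}" "b \<in> {1..<p}"
    by (auto simp: scalars_def)
  then have "\<not> p dvd a * b"
    using prime by (auto simp: prime_dvd_mult_iff zdvd_not_zless)
  then have "(a * b) mod p \<noteq> 0" by (simp add: mod_eq_0_iff_dvd)
  then have "(a * b) mod p \<in> {1..<p}"
    using gt_1 pos_mod_bound[of p "a * b"] pos_mod_sign[of p "a * b"] by auto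
  then show "x \<otimes>\<^bsub>GL2 p\<^esub> y \<in> scalars p"
    using ab by (auto simp: scalars_def mult_GL2)
next
  fix x assume x: "x \<in> scalars p"
  then obtain a where a: "x = (a, 0, 0, a)" "a \<in> {1..<p}" by (auto simp: scalars_def)
  then have "\<not> p dvd a" by (auto simp: zdvd_not_zless)
  then have "coprime a p" using prime by (metis prime_imp_coprime coprime_commute)
  then obtain b where "[a * b = 1] (mod p)" using cong_solve_coprime_int by blast
  then have b: "(a * b) mod p = 1" using gt_1 by (simp add: cong_def)
  have "\<not> p dvd b"
  proof
    assume "p dvd b"
    then have "(a * b) mod p = 0" by simp
    then show False using b by simp
  qed
  then have "b mod p \<noteq> 0" by (simp add: mod_eq_0_iff_dvd)
  then have b_scalar: "(b mod p, 0, 0, b mod p) \<in> scalars p"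
    using gt_1 pos_mod_bound[of p b] pos_mod_sign[of p b] by (auto simp: scalars_def)
  have "(b mod p, 0, 0, b mod p) \<otimes>\<^bsub>GL2 p\<^esub> x = \<one>\<^bsub>GL2 p\<^esub>"
    using b by (simp add: a mult_GL2 one_GL2 mod_mult_right_eq mult.commute)
  then have "inv\<^bsub>GL2 p\<^esub> x = (b mod p, 0, 0, b mod p)"
    using b_scalar x scalars_subset by (intro GL2.inv_equality) auto
  then show "inv\<^bsub>GL2 p\<^esub> x \<in> scalars p"
    using b_scalar by simp
qed

lemma normal_scalars: "scalars p \<lhd> GL2 p"
proof (rule GL2.normal_inv_iff[THEN iffD2], intro conjI ballI subgroup_scalars)
  fix x z assume x: "x \<in> carrier (GL2 p)" and z: "z \<in> scalars p"
  have "x \<otimes>\<^bsub>GL2 p\<^esub> z \<otimes>\<^bsub>GL2 p\<^esub> inv\<^bsub>GL2 p\<^esub> x = z \<otimes>\<^bsub>GL2 p\<^esub> x \<otimes>\<^bsub>GL2 p\<^esub> inv\<^bsub>GL2 p\<^esub> x"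
    using scalars_central[OF z x] by simp
  then have "x \<otimes>\<^bsub>GL2 p\<^esub> z \<otimes>\<^bsub>GL2 p\<^esub> inv\<^bsub>GL2 p\<^esub> x = z"
    using x z scalars_subset by (auto simp: GL2.m_assoc)
  then show "x \<otimes>\<^bsub>GL2 p\<^esub> z \<otimes>\<^bsub>GL2 p\<^esub> inv\<^bsub>GL2 p\<^esub> x \<in> scalars p"
    using z by simp
qed

sublocale PGL2: group "PGL2 p"
  unfolding PGL2_def by (rule normal.factorgroup_is_group[OF normal_scalars])

sublocale proj2: group_hom "GL2 p" "PGL2 p" "proj2 p"
proof unfold_locales
  show "proj2 p \<in> hom (GL2 p) (PGL2 p)"
    using normal.r_coset_hom_Mod[OF normal_scalars] by (simp add: PGL2_def proj2_def[abs_def])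
qed

lemma carrier_PGL2: "carrier (PGL2 p) = proj2 p ` carrier (GL2 p)"
  by (simp add: PGL2_def carrier_FactGroup proj2_def[abs_def])

lemma proj2_eq_iff:
  assumes "g \<in> carrier (GL2 p)" "h \<in> carrier (GL2 p)"
  shows "proj2 p g = proj2 p h \<longleftrightarrow> g \<otimes>\<^bsub>GL2 p\<^esub> inv\<^bsub>GL2 p\<^esub> h \<in> scalars p"
proof -
  have "proj2 p g = proj2 p h \<longleftrightarrow> g \<in> scalars p #>\<^bsub>GL2 p\<^esub> h"
    unfolding proj2_def using assms subgroup_scalars
    by (metis GL2.rcos_self GL2.repr_independence)
  also have "\<dots> \<longleftrightarrow> g \<otimes>\<^bsub>GL2 p\<^esub> inv\<^bsub>GL2 p\<^esub> h \<in> scalars p"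
    using subgroup.rcos_module[OF subgroup_scalars GL2.is_group assms(2,1)] .
  finally show ?thesis .
qed

lemma proj2_eq_one_iff: "g \<in> carrier (GL2 p) \<Longrightarrow> proj2 p g = \<one>\<^bsub>PGL2 p\<^esub> \<longleftrightarrow> g \<in> scalars p"
  using proj2_eq_iff[of g "\<one>\<^bsub>GL2 p\<^esub>"] proj2.hom_one by simp

lemma centralizer_conjugate:
  assumes g: "g \<in> carrier (GL2 p)" and h: "h \<in> carrier (GL2 p)" and d: "d \<in> carrier (GL2 p)"
    and gh: "g \<otimes>\<^bsub>GL2 p\<^esub> h = h \<otimes>\<^bsub>GL2 p\<^esub> d"
  shows "conjugate_set p h (centralizer (GL2 p) d) = centralizer (GL2 p) g"
proof -
  have "h \<otimes>\<^bsub>GL2 p\<^esub> d \<otimes>\<^bsub>GL2 p\<^esub> inv\<^bsub>GL2 p\<^esub> h = g"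
    using g h d by (simp flip: gh add: GL2.m_assoc)
  then show ?thesis
    unfolding conjugate_set_def GL2.centralizer_conj[OF h d] by simp
qed

lemma conjugate_centralizer_of_commuting:
  assumes g: "g \<in> carrier (GL2 p)" and k: "k \<in> carrier (GL2 p)"
    and comm: "proj2 p k \<otimes>\<^bsub>PGL2 p\<^esub> proj2 p g = proj2 p g \<otimes>\<^bsub>PGL2 p\<^esub> proj2 p k"
  shows "conjugate_set p k (centralizer (GL2 p) g) = centralizer (GL2 p) g"
proof -
  define s where "s = k \<otimes>\<^bsub>GL2 p\<^esub> g \<otimes>\<^bsub>GL2 p\<^esub> inv\<^bsub>GL2 p\<^esub> k \<otimes>\<^bsub>GL2 p\<^esub> inv\<^bsub>GL2 p\<^esub> g"
  have s: "s \<in> carrier (GL2 p)" using g k by (simp add: s_def)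
  have "proj2 p (k \<otimes>\<^bsub>GL2 p\<^esub> g \<otimes>\<^bsub>GL2 p\<^esub> inv\<^bsub>GL2 p\<^esub> k) = proj2 p g"
    using g k comm by (simp add: PGL2.m_assoc)
  then have "s \<in> scalars p"
    unfolding s_def by (rule proj2_eq_iff[THEN iffD1, rotated 2]) (use g k in simp_all)
  moreover have "k \<otimes>\<^bsub>GL2 p\<^esub> g \<otimes>\<^bsub>GL2 p\<^esub> inv\<^bsub>GL2 p\<^esub> k = s \<otimes>\<^bsub>GL2 p\<^esub> g"
    using g k by (simp add: s_def GL2.m_assoc)
  ultimately show ?thesis
    unfolding conjugate_set_def GL2.centralizer_conj[OF k g]
    using GL2.centralizer_central_mult[OF s g] scalars_central by simp
qed

lemma proj2_in_normalizer:
  assumes T: "T \<subseteq> carrier (GL2 p)" and k: "k \<in> carrier (GL2 p)"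
    and kT: "conjugate_set p k T = T"
  shows "proj2 p k \<in> normalizer (PGL2 p) (proj2 p ` T)"
proof -
  have "proj2 p k <#\<^bsub>PGL2 p\<^esub> proj2 p ` T #>\<^bsub>PGL2 p\<^esub> inv\<^bsub>PGL2 p\<^esub> proj2 p k
      = proj2 p ` conjugate_set p k T"
    using T k by (force simp: l_coset_def r_coset_def conjugate_set_def subsetD)
  then show ?thesis
    using kT T k by (auto simp: normalizer_def stabilizer_def)
qed

lemma diag_torus_subset: "diag_torus p \<subseteq> carrier (GL2 p)"
  using prime by (auto simp: diag_torus_def carrier_GL2_iff prime_dvd_mult_iff zdvd_not_zless)

lemma centralizer_diag:
  assumes s: "s \<in> {1..<p}" and t: "t \<in> {1..<p}" and st: "s \<noteq> t"
  shows "centralizer (GL2 p) (s, 0, 0, t) = diag_torus p"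
proof (intro equalityI subsetI)
  fix m assume "m \<in> centralizer (GL2 p) (s, 0, 0, t)"
  then obtain x y z w where m: "m = (x, y, z, w)" "m \<in> carrier (GL2 p)"
    and comm: "m \<otimes>\<^bsub>GL2 p\<^esub> (s, 0, 0, t) = (s, 0, 0, t) \<otimes>\<^bsub>GL2 p\<^esub> m"
    by (cases m) (auto simp: centralizer_def)
  have "\<not> p dvd t - s"
    using s t st by (auto simp: mod_eq_dvd_iff[symmetric])
  moreover have "p dvd y * (t - s)" and "p dvd z * (t - s)"
    using comm by (auto simp: m mult_GL2 mod_eq_dvd_iff algebra_simps)
  ultimately have "p dvd y" "p dvd z"
    using prime by (auto simp: prime_dvd_mult_iff)
  then have "y = 0" "z = 0"
    using m(2) by (auto simp: m carrier_GL2_iff residue_dvd_iff)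
  then show "m \<in> diag_torus p"
    using m(2) by (cases "x = 0 \<or> w = 0") (auto simp: m diag_torus_def carrier_GL2_iff)
next
  fix m assume "m \<in> diag_torus p"
  moreover obtain x w where m: "m = (x, 0, 0, w)"
    using \<open>m \<in> diag_torus p\<close> by (auto simp: diag_torus_def)
  ultimately have "m \<in> carrier (GL2 p)"
    using diag_torus_subset by blast
  then show "m \<in> centralizer (GL2 p) (s, 0, 0, t)"
    by (simp add: centralizer_def m mult_GL2 mult.commute)
qed

lemma nonresidue_norm_dvdD:
  assumes e: "\<not> QuadRes p e" and dvd: "p dvd a * a - e * b * b"
  shows "p dvd a \<and> p dvd b"
proof -
  have "p dvd b"
  proof (rule ccontr)
    assume "\<not> p dvd b"
    then have "coprime b p" using prime by (metis prime_imp_coprime coprime_commute)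
    then obtain v where v: "[b * v = 1] (mod p)" using cong_solve_coprime_int by blast
    have "[a * a = e * b * b] (mod p)" using dvd by (simp add: cong_iff_dvd_diff)
    then have "[a * a * (v * v) = e * b * b * (v * v)] (mod p)"
      by (rule cong_mult) (rule cong_refl)
    then have "[(a * v) ^ 2 = e * (b * v) * (b * v)] (mod p)"
      by (simp add: power2_eq_square algebra_simps)
    also have "[e * (b * v) * (b * v) = e * 1 * 1] (mod p)"
      using v by (intro cong_mult cong_refl)
    finally show False using e by (auto simp: QuadRes_def)
  qed
  moreover have "p dvd (a * a - e * b * b) + e * b * b"
    using dvd \<open>p dvd b\<close> by (intro dvd_add) auto
  ultimately show ?thesis
    using prime by (auto simp: prime_dvd_mult_iff)
qed

lemma centralizer_nonsplit:
  assumes e: "\<not> QuadRes p e"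
  shows "centralizer (GL2 p) (0, e mod p, 1, 0) = nonsplit_torus p e"
proof (intro equalityI subsetI)
  fix m assume "m \<in> centralizer (GL2 p) (0, e mod p, 1, 0)"
  then obtain x y z w where m: "m = (x, y, z, w)" "m \<in> carrier (GL2 p)"
    and comm: "m \<otimes>\<^bsub>GL2 p\<^esub> (0, e mod p, 1, 0) = (0, e mod p, 1, 0) \<otimes>\<^bsub>GL2 p\<^esub> m"
    by (cases m) (auto simp: centralizer_def)
  have "w = x" and "y = (e mod p * z) mod p"
    using comm m(2) by (auto simp: m mult_GL2 carrier_GL2_iff)
  moreover have "(e mod p * z) mod p = (z * e) mod p"
    by (metis mod_mult_left_eq mult.commute)
  moreover have "(x, z) \<noteq> (0, 0)"
    using m(2) by (auto simp: m carrier_GL2_iff)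
  ultimately show "m \<in> nonsplit_torus p e"
    using m(2) by (auto simp: m carrier_GL2_iff nonsplit_torus_def)
next
  fix m assume "m \<in> nonsplit_torus p e"
  then obtain a b where m: "m = (a, (b * e) mod p, b, a)"
    and ab: "a \<in> {0..<p}" "b \<in> {0..<p}" "(a, b) \<noteq> (0, 0)"
    by (auto simp: nonsplit_torus_def)
  then have "\<not> (p dvd a \<and> p dvd b)"
    by (auto simp: residue_dvd_iff)
  then have "\<not> p dvd a * a - e * b * b"
    using nonresidue_norm_dvdD[OF e] by blast
  moreover have "[(b * e) mod p * b = e * b * b] (mod p)"
    by (rule cong_mult) (simp_all add: cong_def mult.commute)
  then have "[a * a - (b * e) mod p * b = a * a - e * b * b] (mod p)"
    by (rule cong_diff[OF cong_refl])
  ultimately have "\<not> p dvd a * a - (b * e) mod p * b"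
    by (simp add: cong_dvd_iff)
  then have "m \<in> carrier (GL2 p)"
    using ab gt_1 by (simp add: m carrier_GL2_iff)
  moreover have "(e mod p * b) mod p = (b * e) mod p" "(e mod p * a) mod p = (a * (e mod p)) mod p"
    by (simp_all add: mod_mult_left_eq mod_mult_right_eq mult.commute)
  ultimately show "m \<in> centralizer (GL2 p) (0, e mod p, 1, 0)"
    by (simp add: centralizer_def m mult_GL2 mod_mult_right_eq)
qed

lemma nonzero_square_root:
  assumes sq: "QuadRes p e" and nz: "\<not> p dvd e"
  obtains s where "s \<in> {1..<p}" "[s * s = e] (mod p)"
proof -
  obtain s0 where "[s0 ^ 2 = e] (mod p)"
    using sq by (auto simp: QuadRes_def)
  then have s: "[s0 mod p * (s0 mod p) = e] (mod p)"
    by (simp add: cong_def power2_eq_square mod_mult_eq)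
  then have "\<not> p dvd s0 mod p"
    using nz by (metis cong_dvd_iff dvd_mult2)
  moreover have "s0 mod p \<in> {0..<p}" using gt_1 by simp
  ultimately have "s0 mod p \<in> {1..<p}" by (auto simp: residue_dvd_iff)
  then show thesis using that s by blast
qed

lemma involution_lift_trace_zero:
  assumes g: "g \<in> carrier (GL2 p)" and gg: "g \<otimes>\<^bsub>GL2 p\<^esub> g \<in> scalars p" and ng: "g \<notin> scalars p"
  obtains a b c where "g = (a, b, c, (- a) mod p)" "a \<in> {0..<p}" "b \<in> {0..<p}" "c \<in> {0..<p}"
proof -
  obtain a b c d where g_eq: "g = (a, b, c, d)" by (cases g)
  have r: "a \<in> {0..<p}" "b \<in> {0..<p}" "c \<in> {0..<p}" "d \<in> {0..<p}"
    and det: "\<not> p dvd a * d - b * c"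
    using g by (auto simp: g_eq carrier_GL2_iff)
  obtain m where "mat2_mod p (mat2_prod g g) = (m, 0, 0, m)"
    using gg by (auto simp: scalars_def mult_GL2)
  then have e1: "(a * b + b * d) mod p = 0" and e2: "(c * a + d * c) mod p = 0"
    and e3: "(a * a + b * c) mod p = (c * b + d * d) mod p"
    by (auto simp: g_eq)
  have "b * (a + d) = a * b + b * d" "c * (a + d) = c * a + d * c"
    "(a - d) * (a + d) = (a * a + b * c) - (c * b + d * d)"
    by (simp_all add: algebra_simps)
  then have "p dvd b * (a + d)" "p dvd c * (a + d)" "p dvd (a - d) * (a + d)"
    using e1 e2 e3 by (simp_all add: mod_eq_0_iff_dvd mod_eq_dvd_iff)
  have "p dvd a + d"
  proof (rule ccontr)
    assume "\<not> p dvd a + d"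
    then have "p dvd b" "p dvd c" "p dvd a - d"
      using prime \<open>p dvd b * (a + d)\<close> \<open>p dvd c * (a + d)\<close> \<open>p dvd (a - d) * (a + d)\<close>
      by (auto simp: prime_dvd_mult_iff)
    then have "b = 0" "c = 0" "d = a"
      using r residue_eq_iff_dvd[of a p d] by (simp_all add: residue_dvd_iff)
    then have "g \<in> scalars p"
      using r det by (cases "a = 0") (auto simp: g_eq scalars_def)
    then show False using ng by contradiction
  qed
  then have "d mod p = (- a) mod p"
    by (simp add: mod_eq_dvd_iff add.commute)
  then have "d = (- a) mod p"
    using r by simp
  then show thesis using that r g_eq by blast
qed

lemma nonsplit_conjugator:
  assumes r: "a \<in> {0..<p}" "b \<in> {0..<p}" "c \<in> {0..<p}"
    and e: "\<not> QuadRes p (a * a + b * c)"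
  obtains h where "h \<in> carrier (GL2 p)"
    "(a, b, c, (- a) mod p) \<otimes>\<^bsub>GL2 p\<^esub> h = h \<otimes>\<^bsub>GL2 p\<^esub> (0, (a * a + b * c) mod p, 1, 0)"
proof -
  have "c \<noteq> 0"
  proof
    assume "c = 0"
    then have "QuadRes p (a * a + b * c)"
      unfolding QuadRes_def by (intro exI[of _ a]) (simp add: power2_eq_square)
    then show False using e by contradiction
  qed
  then have h: "(1, a, 0, c) \<in> carrier (GL2 p)"
    using r gt_1 by (simp add: carrier_GL2_iff residue_dvd_iff)
  \<comment> \<open>the columns v = (1, 0) and g v: in this basis g is the companion matrix of X^2 - (a^2 + bc)\<close>
  have "mat2_mod p (a, b, c, - a) \<otimes>\<^bsub>GL2 p\<^esub> mat2_mod p (1, a, 0, c)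
      = mat2_mod p (1, a, 0, c) \<otimes>\<^bsub>GL2 p\<^esub> mat2_mod p (0, a * a + b * c, 1, 0)"
    unfolding mult_GL2_mat2_mod by (simp add: algebra_simps)
  then show thesis
    using that[OF h] r gt_1 mat2_mod_carrier_GL2[OF h] by simp
qed

end

locale odd_prime_modulus = prime_modulus +
  assumes odd: "odd p"
begin

lemma ge_3: "p \<ge> 3"
  using prime_ge_2_int[OF prime] odd by (cases "p = 2") auto

lemma euler_criterion_int: "[Legendre a p = a ^ nat ((p - 1) div 2)] (mod p)"
proof -
  have nat_prime: "Factorial_Ring.prime (nat p)" using prime ge_3 by simp
  then have "[Legendre a (int (nat p)) = a ^ ((nat p - 1) div 2)] (mod int (nat p))"
    using euler_criterion[OF nat_prime] ge_3 by auto
  moreover have "(nat p - 1) div 2 = nat ((p - 1) div 2)" using ge_3 by (simp add: nat_div_distrib)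
  ultimately show ?thesis using ge_3 by simp
qed

lemma sign_eq_of_cong:
  assumes "[x = y] (mod p)" "x \<in> {-1, 0, 1}" "y \<in> {-1, 0, 1}"
  shows "x = y"
proof -
  obtain k where k: "x - y = p * k"
    using assms(1) by (metis cong_iff_dvd_diff dvdE)
  have "\<bar>x - y\<bar> \<le> 2" using assms(2,3) by auto
  then have "k = 0" using k ge_3
    by (smt (verit, best) mult_le_cancel_left1 mult_minus_right zero_less_mult_iff)
  then show ?thesis using k by simp
qed

lemma Legendre_mult: "Legendre (a * b) p = Legendre a p * Legendre b p"
proof -
  let ?k = "nat ((p - 1) div 2)"
  have "[Legendre a p * Legendre b p = (a * b) ^ ?k] (mod p)"
    unfolding power_mult_distrib by (intro cong_mult euler_criterion_int)
  then have "[Legendre (a * b) p = Legendre a p * Legendre b p] (mod p)"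
    by (metis cong_sym cong_trans euler_criterion_int)
  then show ?thesis by (rule sign_eq_of_cong) (auto simp: Legendre_def)
qed

lemma Legendre_minus_one: "Legendre (-1) p = (if [p = 1] (mod 4) then 1 else -1)"
proof -
  have "even ((p - 1) div 2) \<longleftrightarrow> [p = 1] (mod 4)"
    using odd unfolding cong_def by presburger
  then have "(-1) ^ nat ((p - 1) div 2) = (if [p = 1] (mod 4) then 1 else (-1 :: int))"
    using ge_3 by (simp add: even_nat_iff)
  then show ?thesis
    using euler_criterion_int[of "-1"] by (intro sign_eq_of_cong) (auto simp: Legendre_def)
qed

lemma QuadRes_iff_Legendre: "\<not> p dvd a \<Longrightarrow> QuadRes p a \<longleftrightarrow> Legendre a p = 1"
  by (simp add: Legendre_def cong_0_iff)

lemma Legendre_nonzero: "\<not> p dvd a \<Longrightarrow> Legendre a p = 1 \<or> Legendre a p = -1"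
  by (simp add: Legendre_def cong_0_iff)

lemma QuadRes_mult_iff:
  assumes "\<not> p dvd a" "\<not> p dvd b"
  shows "QuadRes p (a * b) \<longleftrightarrow> (QuadRes p a \<longleftrightarrow> QuadRes p b)"
proof -
  have "\<not> p dvd a * b" using assms prime by (simp add: prime_dvd_mult_iff)
  then show ?thesis
    using assms Legendre_nonzero[of a] Legendre_nonzero[of b]
    by (auto simp: QuadRes_iff_Legendre Legendre_mult)
qed

lemma QuadRes_minus_iff:
  assumes "\<not> p dvd a"
  shows "QuadRes p (- a) \<longleftrightarrow> (QuadRes p a \<longleftrightarrow> [p = 1] (mod 4))"
proof -
  have "\<not> p dvd -1" using ge_3 by simp
  then have "QuadRes p (-1 * a) \<longleftrightarrow> (QuadRes p (-1) \<longleftrightarrow> QuadRes p a)"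
    using QuadRes_mult_iff assms by blast
  then show ?thesis
    using QuadRes_iff_Legendre[of "-1"] \<open>\<not> p dvd -1\<close> Legendre_minus_one by auto
qed

lemma not_dvd_two: "\<not> p dvd 2"
  using ge_3 by (auto dest: zdvd_imp_le)

lemma neg_residue:
  assumes s: "s \<in> {1..<p}"
  shows "(- s) mod p \<in> {1..<p}" and "s \<noteq> (- s) mod p"
proof -
  have "\<not> p dvd s" using s by (auto simp: zdvd_not_zless)
  then have "(- s) mod p \<noteq> 0" by (simp add: mod_eq_0_iff_dvd)
  then show "(- s) mod p \<in> {1..<p}"
    using gt_1 pos_mod_bound[of p "- s"] pos_mod_sign[of p "- s"] by auto
  have "\<not> p dvd s - (- s)"
    using not_dvd_two prime \<open>\<not> p dvd s\<close> by (simp add: prime_dvd_mult_iff flip: mult_2)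
  then have "s mod p \<noteq> (- s) mod p" by (simp add: mod_eq_dvd_iff)
  then show "s \<noteq> (- s) mod p" using s by auto
qed

lemma square_root_avoiding:
  assumes sq: "QuadRes p e" and nz: "\<not> p dvd e"
  obtains s where "s \<in> {1..<p}" "[s * s = e] (mod p)" "s \<noteq> a"
proof -
  obtain s0 where s0: "s0 \<in> {1..<p}" "[s0 * s0 = e] (mod p)"
    by (rule nonzero_square_root[OF sq nz])
  show thesis
  proof (cases "s0 = a")
    case True
    have "[(- s0) mod p = - s0] (mod p)" by (rule cong_mod_leftI[OF cong_refl])
    then have "[(- s0) mod p * ((- s0) mod p) = - s0 * - s0] (mod p)"
      using cong_mult by blast
    then have "[(- s0) mod p * ((- s0) mod p) = e] (mod p)"
      using s0(2) by (simp add: cong_trans)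
    moreover have "(- s0) mod p \<noteq> a"
      using neg_residue(2)[OF s0(1)] True by simp
    ultimately show thesis
      using that neg_residue(1)[OF s0(1)] by blast
  next
    case False
    then show thesis
      using that[of s0] s0 by blast
  qed
qed

lemma split_conjugator:
  assumes r: "a \<in> {0..<p}" "b \<in> {0..<p}" "c \<in> {0..<p}"
    and nz: "\<not> p dvd a * a + b * c" and sq: "QuadRes p (a * a + b * c)"
  obtains h s where "h \<in> carrier (GL2 p)" "s \<in> {1..<p}"
    "(a, b, c, (- a) mod p) \<otimes>\<^bsub>GL2 p\<^esub> h = h \<otimes>\<^bsub>GL2 p\<^esub> (s, 0, 0, (- s) mod p)"
proof -
  let ?e = "a * a + b * c"
  obtain s where s: "s \<in> {1..<p}" "[s * s = ?e] (mod p)" "s \<noteq> a"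
    by (rule square_root_avoiding[OF sq nz])
  have e_s: "p dvd ?e - s * s"
    using s(2) by (simp add: cong_iff_dvd_diff dvd_diff_commute)
  \<comment> \<open>the columns of h0 are eigenvectors of g for the eigenvalues s and -s\<close>
  define h0 :: mat2 where "h0 = (b, a - s, s - a, c)"
  have "\<not> p dvd s" using s(1) by (auto simp: zdvd_not_zless)
  moreover have "\<not> p dvd s - a" using residue_eq_iff_dvd[of s p a] s(1,3) r(1) by auto
  ultimately have "\<not> p dvd 2 * s * (s - a)"
    using not_dvd_two prime by (simp add: prime_dvd_mult_iff)
  moreover have "mat2_det h0 = 2 * s * (s - a) + (?e - s * s)"
    by (simp add: h0_def mat2_det_def algebra_simps)
  ultimately have "\<not> p dvd mat2_det h0"
    using e_s by (metis dvd_add_left_iff)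
  then have h: "mat2_mod p h0 \<in> carrier (GL2 p)"
    using gt_1 by (simp add: mat2_mod_in_carrier_GL2_iff)
  have "a * (a - s) + b * c = (a - s) * - s + (?e - s * s)"
    "c * b + - a * (s - a) = (s - a) * s + (?e - s * s)"
    by (simp_all add: algebra_simps)
  then have "mat2_mod p (mat2_prod (a, b, c, - a) h0) = mat2_mod p (mat2_prod h0 (s, 0, 0, - s))"
    using e_s by (simp add: h0_def algebra_simps mod_eq_dvd_iff)
  then have "mat2_mod p (a, b, c, - a) \<otimes>\<^bsub>GL2 p\<^esub> mat2_mod p h0
      = mat2_mod p h0 \<otimes>\<^bsub>GL2 p\<^esub> mat2_mod p (s, 0, 0, - s)"
    unfolding mult_GL2_mat2_mod .
  then show thesis
    using that[OF h s(1)] r s(1) by simp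
qed

lemma split_cartan_centralizer_trace_zero:
  assumes r: "a \<in> {0..<p}" "b \<in> {0..<p}" "c \<in> {0..<p}"
    and g: "(a, b, c, (- a) mod p) \<in> carrier (GL2 p)"
    and nz: "\<not> p dvd a * a + b * c" and sq: "QuadRes p (a * a + b * c)"
  shows "split_cartan p (centralizer (GL2 p) (a, b, c, (- a) mod p))"
proof -
  obtain h s where h: "h \<in> carrier (GL2 p)" and s: "s \<in> {1..<p}"
    and gh: "(a, b, c, (- a) mod p) \<otimes>\<^bsub>GL2 p\<^esub> h = h \<otimes>\<^bsub>GL2 p\<^esub> (s, 0, 0, (- s) mod p)"
    by (rule split_conjugator[OF r nz sq])
  have "(s, 0, 0, (- s) mod p) \<in> diag_torus p"
    using s neg_residue(1)[OF s] by (auto simp: diag_torus_def)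
  then have "(s, 0, 0, (- s) mod p) \<in> carrier (GL2 p)"
    using diag_torus_subset by blast
  then have "centralizer (GL2 p) (a, b, c, (- a) mod p) = conjugate_set p h (diag_torus p)"
    using centralizer_conjugate[OF g h _ gh] centralizer_diag[OF s neg_residue[OF s]] by simp
  then show ?thesis
    unfolding split_cartan_def using h by blast
qed

lemma nonsplit_cartan_centralizer_trace_zero:
  assumes r: "a \<in> {0..<p}" "b \<in> {0..<p}" "c \<in> {0..<p}"
    and g: "(a, b, c, (- a) mod p) \<in> carrier (GL2 p)"
    and e: "\<not> QuadRes p (a * a + b * c)"
  shows "nonsplit_cartan p (centralizer (GL2 p) (a, b, c, (- a) mod p))"
proof -
  let ?e = "a * a + b * c"
  obtain h where h: "h \<in> carrier (GL2 p)"
    and gh: "(a, b, c, (- a) mod p) \<otimes>\<^bsub>GL2 p\<^esub> h = h \<otimes>\<^bsub>GL2 p\<^esub> (0, ?e mod p, 1, 0)"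
    by (rule nonsplit_conjugator[OF r e])
  have "(0, ?e mod p, 1, 0) \<in> nonsplit_torus p ?e"
    unfolding nonsplit_torus_def using gt_1 by (intro CollectI exI[of _ 0] exI[of _ 1]) simp
  then have "(0, ?e mod p, 1, 0) \<in> carrier (GL2 p)"
    unfolding centralizer_nonsplit[OF e, symmetric] centralizer_def by blast
  then have "centralizer (GL2 p) (a, b, c, (- a) mod p) = conjugate_set p h (nonsplit_torus p ?e)"
    using centralizer_conjugate[OF g h _ gh] centralizer_nonsplit[OF e] by simp
  then show ?thesis
    unfolding nonsplit_cartan_def using h e by blast
qed

lemma centralizer_involution_cartan:
  assumes g: "g \<in> carrier (GL2 p)" and gg: "g \<otimes>\<^bsub>GL2 p\<^esub> g \<in> scalars p" and ng: "g \<notin> scalars p"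
  shows "QuadRes p (- mat2_det g) \<Longrightarrow> split_cartan p (centralizer (GL2 p) g)"
    and "\<not> QuadRes p (- mat2_det g) \<Longrightarrow> nonsplit_cartan p (centralizer (GL2 p) g)"
proof -
  obtain a b c where g_eq: "g = (a, b, c, (- a) mod p)"
    and r: "a \<in> {0..<p}" "b \<in> {0..<p}" "c \<in> {0..<p}"
    by (rule involution_lift_trace_zero[OF g gg ng])
  let ?e = "a * a + b * c"
  have "[- mat2_det g = ?e] (mod p)"
    using mat2_det_trace_zero[of a b c] cong_minus_minus_iff[of "mat2_det g" "- ?e" p] by (simp add: g_eq ac_simps)
  then have "QuadRes p (- mat2_det g) \<longleftrightarrow> QuadRes p ?e" and "\<not> p dvd ?e"
    using QuadRes_cong det_not_dvd_GL2[OF g] cong_dvd_iff by (blast, fastforce)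
  then show "QuadRes p (- mat2_det g) \<Longrightarrow> split_cartan p (centralizer (GL2 p) g)"
    and "\<not> QuadRes p (- mat2_det g) \<Longrightarrow> nonsplit_cartan p (centralizer (GL2 p) g)"
    using g r split_cartan_centralizer_trace_zero nonsplit_cartan_centralizer_trace_zero
    unfolding g_eq by blast+
qed

lemma proj2_in_PSL2_iff:
  assumes g: "g \<in> carrier (GL2 p)"
  shows "proj2 p g \<in> PSL2 p \<longleftrightarrow> QuadRes p (mat2_det g)"
proof
  assume "QuadRes p (mat2_det g)"
  then show "proj2 p g \<in> PSL2 p" unfolding PSL2_def using g by blast
next
  assume "proj2 p g \<in> PSL2 p"
  then obtain g' where g': "g' \<in> carrier (GL2 p)" "QuadRes p (mat2_det g')" "proj2 p g' = proj2 p g"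
    by (auto simp: PSL2_def)
  then have "g' \<otimes>\<^bsub>GL2 p\<^esub> inv\<^bsub>GL2 p\<^esub> g \<in> scalars p"
    using proj2_eq_iff[OF g'(1) g] by simp
  then obtain l where l: "l \<in> {1..<p}" "g' \<otimes>\<^bsub>GL2 p\<^esub> inv\<^bsub>GL2 p\<^esub> g = (l, 0, 0, l)"
    by (auto simp: scalars_def)
  moreover have "(l, 0, 0, l) \<in> carrier (GL2 p)"
    using l scalars_subset by (auto simp: scalars_def)
  ultimately have "g' = (l, 0, 0, l) \<otimes>\<^bsub>GL2 p\<^esub> g"
    using g g'(1) by (simp add: GL2.inv_solve_right')
  then have "[mat2_det g' = (l * l) * mat2_det g] (mod p)"
    using det_mult_GL2[where A = "(l, 0, 0, l)" and B = g] by (simp add: mat2_det_def)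
  moreover have "\<not> p dvd l * l"
    using l prime by (auto simp: prime_dvd_mult_iff zdvd_not_zless)
  moreover have "QuadRes p (l * l)"
    unfolding QuadRes_def by (metis cong_refl power2_eq_square)
  ultimately show "QuadRes p (mat2_det g)"
    using g'(2) det_not_dvd_GL2[OF g] QuadRes_cong QuadRes_mult_iff by metis
qed

lemma PSL2_mult_iff:
  assumes x: "x \<in> carrier (PGL2 p)" and y: "y \<in> carrier (PGL2 p)"
  shows "x \<otimes>\<^bsub>PGL2 p\<^esub> y \<in> PSL2 p \<longleftrightarrow> (x \<in> PSL2 p \<longleftrightarrow> y \<in> PSL2 p)"
proof -
  obtain g h where g: "g \<in> carrier (GL2 p)" "x = proj2 p g" and h: "h \<in> carrier (GL2 p)" "y = proj2 p h"
    using x y by (auto simp: carrier_PGL2)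
  have "QuadRes p (mat2_det (g \<otimes>\<^bsub>GL2 p\<^esub> h)) \<longleftrightarrow> QuadRes p (mat2_det g * mat2_det h)"
    by (rule QuadRes_cong[OF det_mult_GL2])
  then show ?thesis
    using g h det_not_dvd_GL2[OF g(1)] det_not_dvd_GL2[OF h(1)]
    by (simp add: proj2_in_PSL2_iff QuadRes_mult_iff flip: proj2.hom_mult)
qed

lemma one_PSL2: "\<one>\<^bsub>PGL2 p\<^esub> \<in> PSL2 p"
proof -
  have "QuadRes p (mat2_det \<one>\<^bsub>GL2 p\<^esub>)"
    unfolding QuadRes_def by (intro exI[of _ 1]) (simp add: one_GL2 mat2_det_def)
  then show ?thesis
    using proj2_in_PSL2_iff[OF GL2.one_closed] by simp
qed

lemma involution_cartan:
  assumes x: "x \<in> carrier (PGL2 p)" and xx: "x \<otimes>\<^bsub>PGL2 p\<^esub> x = \<one>\<^bsub>PGL2 p\<^esub>" and x1: "x \<noteq> \<one>\<^bsub>PGL2 p\<^esub>"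
  obtains g where "g \<in> carrier (GL2 p)" "x = proj2 p g"
    "{\<one>\<^bsub>PGL2 p\<^esub>, x} \<subseteq> proj2 p ` centralizer (GL2 p) g"
    "x \<in> PSL2 p \<longleftrightarrow> [p = 1] (mod 4) \<Longrightarrow> split_cartan p (centralizer (GL2 p) g)"
    "\<not> (x \<in> PSL2 p \<longleftrightarrow> [p = 1] (mod 4)) \<Longrightarrow> nonsplit_cartan p (centralizer (GL2 p) g)"
proof -
  obtain g where g: "g \<in> carrier (GL2 p)" and x_eq: "x = proj2 p g"
    using x by (auto simp: carrier_PGL2)
  have "g \<otimes>\<^bsub>GL2 p\<^esub> g \<in> scalars p" "g \<notin> scalars p"
    using xx x1 g by (simp_all add: x_eq proj2_eq_one_iff flip: proj2.hom_mult)
  note cartan = centralizer_involution_cartan[OF g this]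
  have "QuadRes p (- mat2_det g) \<longleftrightarrow> (x \<in> PSL2 p \<longleftrightarrow> [p = 1] (mod 4))"
    using QuadRes_minus_iff det_not_dvd_GL2[OF g] proj2_in_PSL2_iff[OF g] x_eq by simp
  moreover have "{\<one>\<^bsub>PGL2 p\<^esub>, x} \<subseteq> proj2 p ` centralizer (GL2 p) g"
    using g by (auto simp: x_eq centralizer_def intro: image_eqI[of _ _ "\<one>\<^bsub>GL2 p\<^esub>"])
  ultimately show thesis
    using that[OF g x_eq] cartan by blast
qed

lemma in_cartan_involution:
  assumes "x \<in> carrier (PGL2 p)" "x \<otimes>\<^bsub>PGL2 p\<^esub> x = \<one>\<^bsub>PGL2 p\<^esub>" "x \<noteq> \<one>\<^bsub>PGL2 p\<^esub>"
  shows "x \<in> PSL2 p \<longleftrightarrow> [p = 1] (mod 4) \<Longrightarrow> in_split_cartan p {\<one>\<^bsub>PGL2 p\<^esub>, x}"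
    and "\<not> (x \<in> PSL2 p \<longleftrightarrow> [p = 1] (mod 4)) \<Longrightarrow> in_nonsplit_cartan p {\<one>\<^bsub>PGL2 p\<^esub>, x}"
  using involution_cartan[OF assms] unfolding in_split_cartan_def in_nonsplit_cartan_def by metis+

lemma index_two_subgroups_PSL2:
  assumes N: "subgroup N (PGL2 p)" and sq: "\<And>x. x \<in> N \<Longrightarrow> x \<otimes>\<^bsub>PGL2 p\<^esub> x = \<one>\<^bsub>PGL2 p\<^esub>"
    and NP: "N \<subseteq> PSL2 p"
  shows "\<forall>C \<in> (\<lambda>x. {\<one>\<^bsub>PGL2 p\<^esub>, x}) ` (N - {\<one>\<^bsub>PGL2 p\<^esub>}).
           \<exists>T. cartan p T \<and> C \<subseteq> proj2 p ` T
             \<and> N \<subseteq> normalizer (PGL2 p) (proj2 p ` T)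
             \<and> ([p = 1] (mod 4) \<longrightarrow> split_cartan p T)
             \<and> ([p = 3] (mod 4) \<longrightarrow> nonsplit_cartan p T)"
proof
  fix C assume "C \<in> (\<lambda>x. {\<one>\<^bsub>PGL2 p\<^esub>, x}) ` (N - {\<one>\<^bsub>PGL2 p\<^esub>})"
  then obtain x where x: "x \<in> N - {\<one>\<^bsub>PGL2 p\<^esub>}" and C_eq: "C = {\<one>\<^bsub>PGL2 p\<^esub>, x}" by blast
  have NG: "N \<subseteq> carrier (PGL2 p)" using subgroup.subset[OF N] .
  obtain g where g: "g \<in> carrier (GL2 p)" "x = proj2 p g"
    and C: "{\<one>\<^bsub>PGL2 p\<^esub>, x} \<subseteq> proj2 p ` centralizer (GL2 p) g"
    and split: "x \<in> PSL2 p \<longleftrightarrow> [p = 1] (mod 4) \<Longrightarrow> split_cartan p (centralizer (GL2 p) g)"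
    and nonsplit: "\<not> (x \<in> PSL2 p \<longleftrightarrow> [p = 1] (mod 4)) \<Longrightarrow> nonsplit_cartan p (centralizer (GL2 p) g)"
    using involution_cartan[of x] x NG sq by blast
  have "N \<subseteq> normalizer (PGL2 p) (proj2 p ` centralizer (GL2 p) g)"
  proof
    fix y assume y: "y \<in> N"
    then obtain k where k: "k \<in> carrier (GL2 p)" "y = proj2 p k"
      using NG by (auto simp: carrier_PGL2)
    have "y \<otimes>\<^bsub>PGL2 p\<^esub> x = x \<otimes>\<^bsub>PGL2 p\<^esub> y"
      using x y NG sq subgroup.m_closed[OF N] by (intro PGL2.exponent_two_commute) auto
    then have "conjugate_set p k (centralizer (GL2 p) g) = centralizer (GL2 p) g"
      using conjugate_centralizer_of_commuting g k by simp
    then show "y \<in> normalizer (PGL2 p) (proj2 p ` centralizer (GL2 p) g)"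
      using proj2_in_normalizer[OF _ k(1)] k(2) by (auto simp: centralizer_def)
  qed
  moreover have "x \<in> PSL2 p" using x NP by auto
  ultimately show "\<exists>T. cartan p T \<and> C \<subseteq> proj2 p ` T
             \<and> N \<subseteq> normalizer (PGL2 p) (proj2 p ` T)
             \<and> ([p = 1] (mod 4) \<longrightarrow> split_cartan p T)
             \<and> ([p = 3] (mod 4) \<longrightarrow> nonsplit_cartan p T)"
    using C split nonsplit unfolding C_eq cartan_def cong_def by (intro exI[of _ "centralizer (GL2 p) g"]) auto
qed

lemma exponent_two_not_in_PSL2:
  assumes N: "subgroup N (PGL2 p)" and card: "card N = 4"
    and sq: "\<And>x. x \<in> N \<Longrightarrow> x \<otimes>\<^bsub>PGL2 p\<^esub> x = \<one>\<^bsub>PGL2 p\<^esub>" and NP: "\<not> N \<subseteq> PSL2 p"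
  obtains u y v where "N - {\<one>\<^bsub>PGL2 p\<^esub>} = {u, y, v}" "card {u, y, v} = 3"
    "u \<in> PSL2 p" "y \<notin> PSL2 p" "v \<notin> PSL2 p"
proof -
  let ?one = "\<one>\<^bsub>PGL2 p\<^esub>"
  obtain y where y: "y \<in> N - {?one}" "y \<notin> PSL2 p" using NP one_PSL2 by blast
  have "finite N" using card by (intro card_ge_0_finite) simp
  moreover have "?one \<noteq> y" using y by blast
  then have "card {?one, y} = 2" by simp
  ultimately have "card (N - {?one, y}) = 2"
    using card y subgroup.one_closed[OF N] by (simp add: card_Diff_subset)
  then obtain z where z: "z \<in> N - {?one, y}" by (metis all_not_in_conv card.empty zero_neq_numeral)
  have "y \<in> carrier (PGL2 p)" "z \<in> carrier (PGL2 p)" using y z subgroup.subset[OF N] by auto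
  then have yz: "y \<otimes>\<^bsub>PGL2 p\<^esub> z \<in> PSL2 p \<longleftrightarrow> z \<notin> PSL2 p"
    using PSL2_mult_iff y(2) by simp
  obtain u v where uv: "{u, v} = {z, y \<otimes>\<^bsub>PGL2 p\<^esub> z}" "u \<in> PSL2 p" "v \<notin> PSL2 p"
  proof (cases "z \<in> PSL2 p")
    case True
    then show thesis using that[of z "y \<otimes>\<^bsub>PGL2 p\<^esub> z"] yz by blast
  next
    case False
    then show thesis using that[of "y \<otimes>\<^bsub>PGL2 p\<^esub> z" z] yz insert_commute by blast
  qed
  moreover have "{u, y, v} = insert y {u, v}" by blast
  ultimately have "{u, y, v} = {y, z, y \<otimes>\<^bsub>PGL2 p\<^esub> z}" by simp
  then have "N - {?one} = {u, y, v}" "card {u, y, v} = 3"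
    using PGL2.exponent_two_nonidentity_elements[OF N card sq y(1) z] by simp_all
  then show thesis
    using that uv(2,3) y(2) by simp
qed

lemma index_two_subgroups_not_PSL2:
  assumes N: "subgroup N (PGL2 p)" and card: "card N = 4"
    and sq: "\<And>x. x \<in> N \<Longrightarrow> x \<otimes>\<^bsub>PGL2 p\<^esub> x = \<one>\<^bsub>PGL2 p\<^esub>" and NP: "\<not> N \<subseteq> PSL2 p"
  shows "\<exists>C1 C2 C3. (\<lambda>x. {\<one>\<^bsub>PGL2 p\<^esub>, x}) ` (N - {\<one>\<^bsub>PGL2 p\<^esub>}) = {C1, C2, C3}
           \<and> card {C1, C2, C3} = 3
           \<and> ([p = 1] (mod 4) \<longrightarrow>
                in_split_cartan p C1 \<and> in_nonsplit_cartan p C2 \<and> in_nonsplit_cartan p C3)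
           \<and> ([p = 3] (mod 4) \<longrightarrow>
                in_nonsplit_cartan p C1 \<and> in_split_cartan p C2 \<and> in_split_cartan p C3)"
proof -
  let ?one = "\<one>\<^bsub>PGL2 p\<^esub>"
  obtain u y v where Ne: "N - {?one} = {u, y, v}" and "card {u, y, v} = 3"
    and PSL2: "u \<in> PSL2 p" "y \<notin> PSL2 p" "v \<notin> PSL2 p"
    by (rule exponent_two_not_in_PSL2[OF assms])
  moreover have "inj_on (\<lambda>x. {?one, x}) (N - {?one})"
    by (auto intro!: inj_onI simp: doubleton_eq_iff)
  ultimately have card3: "card {{?one, u}, {?one, y}, {?one, v}} = 3"
    using card_image[of "\<lambda>x. {?one, x}" "{u, y, v}"] by simp
  have involution: "w \<in> carrier (PGL2 p)" "w \<otimes>\<^bsub>PGL2 p\<^esub> w = ?one" "w \<noteq> ?one"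
    if "w \<in> {u, y, v}" for w
  proof -
    have "w \<in> N - {?one}" using that Ne by simp
    then show "w \<in> carrier (PGL2 p)" "w \<otimes>\<^bsub>PGL2 p\<^esub> w = ?one" "w \<noteq> ?one"
      using subgroup.subset[OF N] sq by auto
  qed
  note split = in_cartan_involution(1)[OF involution] and nonsplit = in_cartan_involution(2)[OF involution]
  have "(\<lambda>x. {?one, x}) ` (N - {?one}) = {{?one, u}, {?one, y}, {?one, v}}"
    using Ne by simp
  moreover have "in_split_cartan p {?one, u} \<and> in_nonsplit_cartan p {?one, y} \<and> in_nonsplit_cartan p {?one, v}"
    if "[p = 1] (mod 4)"
    using split nonsplit PSL2 that by simp
  moreover have "in_nonsplit_cartan p {?one, u} \<and> in_split_cartan p {?one, y} \<and> in_split_cartan p {?one, v}"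
    if "[p = 3] (mod 4)"
  proof -
    have "\<not> [p = 1] (mod 4)" using that by (simp add: cong_def)
    then show ?thesis using split nonsplit PSL2 by simp
  qed
  ultimately show ?thesis
    using card3 by blast
qed
end

theorem lemma2p7:
  fixes p :: int and N :: "mat2 set set"
  assumes "Factorial_Ring.prime p" and "odd p"
    and "subgroup N (PGL2 p)"
    and "(PGL2 p)\<lparr>carrier := N\<rparr> \<cong> integer_mod_group 2 \<times>\<times> integer_mod_group 2"
  shows "(N \<subseteq> PSL2 p \<longrightarrow>
            (\<forall>C \<in> index2_subgroups p N.
               \<exists>T. cartan p T \<and> C \<subseteq> proj2 p ` T
                   \<and> N \<subseteq> normalizer (PGL2 p) (proj2 p ` T)
                   \<and> ([p = 1] (mod 4) \<longrightarrow> split_cartan p T)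
                   \<and> ([p = 3] (mod 4) \<longrightarrow> nonsplit_cartan p T)))
       \<and> (\<not> N \<subseteq> PSL2 p \<longrightarrow>
            (\<exists>C1 C2 C3. index2_subgroups p N = {C1, C2, C3} \<and> card {C1, C2, C3} = 3 \<and>
               ([p = 1] (mod 4) \<longrightarrow>
                  in_split_cartan p C1 \<and> in_nonsplit_cartan p C2 \<and> in_nonsplit_cartan p C3) \<and>
               ([p = 3] (mod 4) \<longrightarrow>
                  in_nonsplit_cartan p C1 \<and> in_split_cartan p C2 \<and> in_split_cartan p C3)))"
proof -
  interpret odd_prime_modulus p
    by standard (fact assms(1), fact assms(2))
  have card: "card N = 4" and sq: "\<And>x. x \<in> N \<Longrightarrow> x \<otimes>\<^bsub>PGL2 p\<^esub> x = \<one>\<^bsub>PGL2 p\<^esub>"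
    using PGL2.Klein_four_subgroupD[OF assms(3,4)] by auto
  have subgroups: "index2_subgroups p N = (\<lambda>x. {\<one>\<^bsub>PGL2 p\<^esub>, x}) ` (N - {\<one>\<^bsub>PGL2 p\<^esub>})"
    using PGL2.index_two_subgroups_exponent_two[OF assms(3) card sq] by (simp add: index2_subgroups_def)
  show ?thesis
    unfolding subgroups
    by (intro conjI impI index_two_subgroups_PSL2[OF assms(3) sq] index_two_subgroups_not_PSL2[OF assms(3) card sq])
qed

end
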